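(* Let $0<\delta<1$ and let $G$ be a $d$-regular graph on $n$ vertices whose second largest adjacency eigenvalue satisfies $\lambda_2\le\delta d$ (in particular, this holds for any $(n,d,\lambda)$-graph with $\lambda<\delta d$). Then, with activation threshold $r=2$, every set of vertices of size larger than $\frac{n}{(1-\delta)d}$ is contagious.
   Context: Bootstrap percolation with threshold $r\ge 2$ on a graph $G=(V,E)$: given a set $A_0\subseteq V$ of seeds, define for $i\ge1$ $A_i=A_{i-1}\cup\{v:|N(v)\cap A_{i-1}|\ge r\}$, where $N(v)$ is the set of neighbors of $v$, and $\langle A_0\rangle=\bigcup_i A_i$. The set $A_0$ is contagious if $\langle A_0\rangle=V$. The adjacency eigenvalues are ordered $d=\lambda_1\ge\lambda_2\ge\dots\ge\lambda_n$; an $(n,d,\lambda)$-graph is a $d$-regular $n$-vertex graph with $\max\{|\lambda_2|,|\lambda_n|\}\le\lambda$. *)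

theory Defs
  imports "Jordan_Normal_Form.Char_Poly" "HOL-Library.Multiset"
begin

definition simple_graph :: "nat \<Rightarrow> (nat \<Rightarrow> nat \<Rightarrow> bool) \<Rightarrow> bool" where
  "simple_graph n E \<longleftrightarrow> (\<forall>u v. E u v \<longrightarrow> u < n \<and> v < n) \<and>
                         (\<forall>u v. E u v \<longrightarrow> E v u) \<and> (\<forall>v. \<not> E v v)"

definition nbrs :: "nat \<Rightarrow> (nat \<Rightarrow> nat \<Rightarrow> bool) \<Rightarrow> nat \<Rightarrow> nat set" where
  "nbrs n E v = {u. u < n \<and> E v u}"

definition regular :: "nat \<Rightarrow> (nat \<Rightarrow> nat \<Rightarrow> bool) \<Rightarrow> nat \<Rightarrow> bool" where
  "regular n E d \<longleftrightarrow> (\<forall>v<n. card (nbrs n E v) = d)"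

definition adj_mat :: "nat \<Rightarrow> (nat \<Rightarrow> nat \<Rightarrow> bool) \<Rightarrow> real mat" where
  "adj_mat n E = mat n n (\<lambda>(i,j). if E i j then 1 else 0)"

text \<open>Adjacency eigenvalues (with multiplicity) in non-increasing order:
  lambda_1 = eigs ! 0, lambda_2 = eigs ! 1, ...\<close>
definition adj_eigenvalues :: "nat \<Rightarrow> (nat \<Rightarrow> nat \<Rightarrow> bool) \<Rightarrow> real list" where
  "adj_eigenvalues n E = rev (sorted_list_of_multiset (proots (char_poly (adj_mat n E))))"

definition bp_step :: "nat \<Rightarrow> (nat \<Rightarrow> nat \<Rightarrow> bool) \<Rightarrow> nat \<Rightarrow> nat set \<Rightarrow> nat set" where
  "bp_step n E r A = A \<union> {v. v < n \<and> card (nbrs n E v \<inter> A) \<ge> r}"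

definition bp_closure :: "nat \<Rightarrow> (nat \<Rightarrow> nat \<Rightarrow> bool) \<Rightarrow> nat \<Rightarrow> nat set \<Rightarrow> nat set" where
  "bp_closure n E r A0 = (\<Union>i. (bp_step n E r ^^ i) A0)"

definition contagious :: "nat \<Rightarrow> (nat \<Rightarrow> nat \<Rightarrow> bool) \<Rightarrow> nat \<Rightarrow> nat set \<Rightarrow> bool" where
  "contagious n E r A0 \<longleftrightarrow> bp_closure n E r A0 = {0..<n}"

end

theory Submission
  imports Defs "Jordan_Normal_Form.Schur_Decomposition"
begin

text \<open>Let B be the closure of A and C its complement. With threshold 2, every vertex of C has
  at most one neighbour in B, so at most |C| edges join B and C. On the other hand, the
  centred indicator x = 1_B - |B|/n is orthogonal to the all-ones eigenvector, so the Rayleigh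
  quotient bound for the second eigenvalue gives x^T A x \<le> \<delta> d |x|^2; since the Laplacian form
  d |x|^2 - x^T A x counts the edges between B and C, there are at least
  (1 - \<delta>) d |B| |C| / n of them. If C were nonempty this would force |B| \<le> n / ((1 - \<delta>) d),
  contradicting |A| \<le> |B|.\<close>

section \<open>Orthonormal matrices\<close>

lemma conjugate_real [simp]: "conjugate (x :: real) = x"
  by (simp add: conjugate_real_def)

lemma cscalar_prod_real [simp]: "(v :: real vec) \<bullet>c w = v \<bullet> w"
  unfolding scalar_prod_def by simp

lemma scalar_prod_self_pos_iff:
  "(v :: real vec) \<in> carrier_vec n \<Longrightarrow> 0 < v \<bullet> v \<longleftrightarrow> v \<noteq> 0\<^sub>v n"
  using conjugate_square_greater_0_vec[of v n] by simp

definition normalize_vec :: "real vec \<Rightarrow> real vec" where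
  "normalize_vec v = (1 / sqrt (v \<bullet> v)) \<cdot>\<^sub>v v"

lemma normalize_vec_carrier [simp]: "v \<in> carrier_vec n \<Longrightarrow> normalize_vec v \<in> carrier_vec n"
  by (simp add: normalize_vec_def)

lemma scalar_prod_normalize_vec:
  assumes "v \<in> carrier_vec n" "w \<in> carrier_vec n"
  shows "normalize_vec v \<bullet> normalize_vec w = (v \<bullet> w) / (sqrt (v \<bullet> v) * sqrt (w \<bullet> w))"
  using assms by (simp add: normalize_vec_def)

lemma normalize_vec_unit:
  assumes "v \<in> carrier_vec n" "v \<noteq> 0\<^sub>v n"
  shows "normalize_vec v \<bullet> normalize_vec v = 1"
proof -
  have "0 < v \<bullet> v" using assms scalar_prod_self_pos_iff by blast
  then show ?thesis using assms by (simp add: scalar_prod_normalize_vec)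
qed

definition orthonormal_mat :: "nat \<Rightarrow> real mat \<Rightarrow> bool" where
  "orthonormal_mat n U \<longleftrightarrow> U \<in> carrier_mat n n \<and> transpose_mat U * U = 1\<^sub>m n"

lemma orthonormal_mat_carrier: "orthonormal_mat n U \<Longrightarrow> U \<in> carrier_mat n n"
  by (simp add: orthonormal_mat_def)

lemma orthonormal_mat_right_inverse:
  "orthonormal_mat n U \<Longrightarrow> U * transpose_mat U = 1\<^sub>m n"
  unfolding orthonormal_mat_def by (metis mat_mult_left_right_inverse transpose_carrier_mat)

lemma orthonormal_mat_col_scalar_prod:
  assumes "orthonormal_mat n U" "i < n" "j < n"
  shows "col U i \<bullet> col U j = (if i = j then 1 else 0)"
proof -
  have U: "U \<in> carrier_mat n n" and UU: "transpose_mat U * U = 1\<^sub>m n"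
    using assms(1) by (simp_all add: orthonormal_mat_def)
  have "col U i \<bullet> col U j = (transpose_mat U * U) $$ (i, j)"
    using U assms(2,3) by simp
  also have "\<dots> = 1\<^sub>m n $$ (i, j)" by (simp only: UU)
  finally show ?thesis using assms(2,3) by simp
qed

lemma orthonormal_mat_mult:
  assumes U: "orthonormal_mat n U" and V: "orthonormal_mat n V"
  shows "orthonormal_mat n (U * V)"
proof -
  have Uc: "U \<in> carrier_mat n n" and Vc: "V \<in> carrier_mat n n"
    using U V by (simp_all add: orthonormal_mat_def)
  have "transpose_mat (U * V) * (U * V) = transpose_mat V * ((transpose_mat U * U) * V)"
    using Uc Vc by (simp add: transpose_mult assoc_mult_mat[of _ n n _ n _ n])
  also have "\<dots> = 1\<^sub>m n" using U V Vc by (simp add: orthonormal_mat_def)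
  finally show ?thesis using Uc Vc by (simp add: orthonormal_mat_def)
qed

lemma orthonormal_mat_with_first_col:
  fixes v :: "real vec"
  assumes v: "v \<in> carrier_vec n" and vv: "v \<bullet> v = 1"
  obtains W where "orthonormal_mat n W" "col W 0 = v"
proof -
  interpret cof_vec_space n "TYPE(real)" .
  have v0: "v \<noteq> 0\<^sub>v n" using vv v by auto
  define b where "b = basis_completion v"
  define ws where "ws = gram_schmidt n b"
  from basis_completion[OF v v0, folded b_def]
  have b: "distinct b" "\<not> lin_dep (set b)" "set b \<subseteq> carrier_vec n" "hd b = v" "length b = n"
    by auto
  have n: "n > 0" using v0 v by (cases n) auto
  from b(4,5) n obtain vs where bv: "b = v # vs" by (cases b) auto
  from gram_schmidt_result[OF b(3,1,2) refl, folded ws_def]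
  have ws: "set ws \<subseteq> carrier_vec n" "corthogonal ws" "length ws = n"
    by (auto simp: b(5))
  have wsc: "ws ! i \<in> carrier_vec n" if "i < n" for i using ws that by auto
  have orth: "ws ! i \<bullet> ws ! j = 0 \<longleftrightarrow> i \<noteq> j" if "i < n" "j < n" for i j
    using corthogonalD[OF ws(2)] that ws(3) by simp
  define W where "W = mat_of_cols n (map normalize_vec ws)"
  have colW: "col W i = normalize_vec (ws ! i)" if "i < n" for i
    unfolding W_def using that ws wsc[OF that] by simp
  have Wc: "W \<in> carrier_mat n n" unfolding W_def using ws by auto
  have "transpose_mat W * W = 1\<^sub>m n"
  proof (rule eq_matI)
    fix i j assume "i < dim_row (1\<^sub>m n)" "j < dim_col (1\<^sub>m n)"
    then have i: "i < n" and j: "j < n" by auto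
    have "ws ! i \<noteq> 0\<^sub>v n" using orth[OF i i] wsc[OF i] by auto
    then have "col W i \<bullet> col W j = 1\<^sub>m n $$ (i, j)"
      using i j colW orth[OF i j] normalize_vec_unit[OF wsc[OF i]]
        scalar_prod_normalize_vec[OF wsc[OF i] wsc[OF j]]
      by auto
    then show "(transpose_mat W * W) $$ (i, j) = 1\<^sub>m n $$ (i, j)"
      using i j Wc by simp
  qed (use Wc in simp_all)
  moreover have "ws ! 0 = v"
    using gram_schmidt_hd[OF v, of vs, folded bv ws_def] n ws(3) by (cases ws) auto
  then have "col W 0 = v"
    using colW[OF n] vv by (simp add: normalize_vec_def)
  ultimately show thesis using that Wc by (simp add: orthonormal_mat_def)
qed

section \<open>Spectral theorem for real symmetric matrices\<close>

lemma symmetric_mat_complex_eigenvalue_real: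
  fixes A :: "real mat"
  assumes A: "A \<in> carrier_mat n n" and sym: "transpose_mat A = A"
    and ev: "eigenvalue (map_mat complex_of_real A) a"
  shows "a = of_real (Re a)"
proof -
  obtain v where v: "v \<in> carrier_vec n" "v \<noteq> 0\<^sub>v n" "map_mat of_real A *\<^sub>v v = a \<cdot>\<^sub>v v"
    using ev A unfolding eigenvalue_def eigenvector_def by auto
  have Asym: "A $$ (i, j) = A $$ (j, i)" if "i < n" "j < n" for i j
    using arg_cong[OF sym, of "\<lambda>M. M $$ (i, j)"] that A by auto
  \<comment> \<open>The Hermitian form S = v* A v is its own conjugate by symmetry, and equals a |v|^2.\<close>
  define S where "S = (\<Sum>i<n. \<Sum>j<n. cnj (v$i) * of_real (A $$ (i, j)) * v$j)"
  define N where "N = (\<Sum>i<n. cnj (v$i) * v$i)"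
  have row: "(\<Sum>j<n. of_real (A $$ (i, j)) * v$j) = a * v$i" if "i < n" for i
  proof -
    have "(map_mat of_real A *\<^sub>v v) $ i = (\<Sum>j<n. of_real (A $$ (i, j)) * v$j)"
      using that A v(1) by (auto simp: scalar_prod_def lessThan_atLeast0 intro!: sum.cong)
    then show ?thesis using v(1,3) that by simp
  qed
  have "S = (\<Sum>i<n. cnj (v$i) * (\<Sum>j<n. of_real (A $$ (i, j)) * v$j))"
    unfolding S_def by (simp add: sum_distrib_left mult.assoc)
  also have "\<dots> = (\<Sum>i<n. a * (cnj (v$i) * v$i))" by (intro sum.cong refl) (simp add: row)
  also have "\<dots> = a * N" unfolding N_def by (simp add: sum_distrib_left)
  finally have S_eq: "S = a * N" .
  have "cnj S = (\<Sum>i<n. \<Sum>j<n. v$i * of_real (A $$ (i, j)) * cnj (v$j))"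
    unfolding S_def by (simp add: cnj_sum)
  also have "\<dots> = (\<Sum>j<n. \<Sum>i<n. v$i * of_real (A $$ (i, j)) * cnj (v$j))"
    by (rule sum.swap)
  also have "\<dots> = S"
    unfolding S_def by (intro sum.cong refl) (simp add: Asym mult_ac)
  finally have S_real: "cnj S = S" .
  have N_real: "cnj N = N" unfolding N_def by (simp add: cnj_sum mult_ac)
  have "N \<noteq> 0"
  proof
    assume "N = 0"
    moreover have "Re N = (\<Sum>i<n. (Re (v$i))\<^sup>2 + (Im (v$i))\<^sup>2)"
      unfolding N_def by (simp add: Re_sum power2_eq_square sum.distrib)
    ultimately have "(\<Sum>i<n. (Re (v$i))\<^sup>2 + (Im (v$i))\<^sup>2) = 0" by simp
    then have "\<forall>i\<in>{..<n}. (Re (v$i))\<^sup>2 + (Im (v$i))\<^sup>2 = 0"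
      by (subst sum_nonneg_eq_0_iff[symmetric]) auto
    then have "v = 0\<^sub>v n" using v(1) by (intro eq_vecI) (auto simp: complex_eq_iff)
    then show False using v(2) by simp
  qed
  have "cnj a = a" using S_eq S_real N_real \<open>N \<noteq> 0\<close> by (simp add: complex_cnj_mult)
  then show ?thesis by (simp add: complex_eq_iff)
qed

lemma symmetric_mat_unit_eigenvector:
  fixes A :: "real mat"
  assumes A: "A \<in> carrier_mat n n" and sym: "transpose_mat A = A" and n: "n > 0"
  obtains e v where "v \<in> carrier_vec n" "v \<bullet> v = 1" "A *\<^sub>v v = e \<cdot>\<^sub>v v"
proof -
  define Ac where "Ac = map_mat complex_of_real A"
  have Ac: "Ac \<in> carrier_mat n n" using A by (simp add: Ac_def)
  obtain as where cp: "char_poly Ac = (\<Prod>a\<leftarrow>as. [:- a, 1:])" and las: "length as = n"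
    using char_poly_factorized[OF Ac] by blast
  obtain a where a: "a \<in> set as" using las n by (cases as) auto
  have root: "poly (char_poly Ac) a = 0" unfolding cp poly_prod_list
    using a by (auto simp: prod_list_zero_iff)
  then have "a = of_real (Re a)"
    using symmetric_mat_complex_eigenvalue_real[OF A sym] eigenvalue_root_char_poly[OF Ac]
    unfolding Ac_def by blast
  then have "poly (char_poly Ac) (of_real (Re a)) = 0" using root by simp
  then have "of_real (poly (char_poly A) (Re a)) = (0 :: complex)"
    unfolding Ac_def of_real_hom.char_poly_hom[OF A] by simp
  then have "eigenvalue A (Re a)" using eigenvalue_root_char_poly[OF A] by simp
  then obtain w where w: "w \<in> carrier_vec n" "w \<noteq> 0\<^sub>v n" "A *\<^sub>v w = Re a \<cdot>\<^sub>v w"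
    unfolding eigenvalue_def eigenvector_def using A by auto
  have "A *\<^sub>v normalize_vec w = Re a \<cdot>\<^sub>v normalize_vec w"
    unfolding normalize_vec_def using w A by (simp add: mult_mat_vec smult_smult_assoc mult.commute)
  then show thesis using that normalize_vec_carrier[OF w(1)] normalize_vec_unit[OF w(1,2)] by blast
qed

lemma transpose_mult_congruence:
  fixes A U V :: "'a :: comm_semiring_1 mat"
  assumes "A \<in> carrier_mat n n" "U \<in> carrier_mat n n" "V \<in> carrier_mat n n"
  shows "transpose_mat (U * V) * A * (U * V) = transpose_mat V * (transpose_mat U * A * U) * V"
  using assms by (simp add: transpose_mult assoc_mult_mat[of _ n n _ n _ n])

lemma orthonormal_congruence_eigenvector_block:
  fixes A :: "real mat"
  assumes A: "A \<in> carrier_mat (Suc m) (Suc m)" and sym: "transpose_mat A = A"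
    and W: "orthonormal_mat (Suc m) W" and W0: "col W 0 = v" and ev: "A *\<^sub>v v = e \<cdot>\<^sub>v v"
  obtains A3 where "A3 \<in> carrier_mat m m" "transpose_mat A3 = A3"
    "transpose_mat W * A * W = four_block_mat (mat 1 1 (\<lambda>_. e)) (0\<^sub>m 1 m) (0\<^sub>m m 1) A3"
proof -
  have Wc: "W \<in> carrier_mat (Suc m) (Suc m)" using W by (rule orthonormal_mat_carrier)
  define A' where "A' = transpose_mat W * A * W"
  have Wt: "transpose_mat W \<in> carrier_mat (Suc m) (Suc m)" using Wc by simp
  have A': "A' \<in> carrier_mat (Suc m) (Suc m)" unfolding A'_def using Wc A by auto
  have "transpose_mat A' = transpose_mat W * (transpose_mat A * W)"
    unfolding A'_def transpose_mult[OF mult_carrier_mat[OF Wt A] Wc]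
      transpose_mult[OF Wt A] by simp
  then have A'T: "transpose_mat A' = A'"
    unfolding A'_def sym using Wc A by (simp add: assoc_mult_mat[of _ "Suc m" "Suc m"])
  have A'sym: "A' $$ (i, j) = A' $$ (j, i)" if "i < Suc m" "j < Suc m" for i j
    using arg_cong[OF A'T, of "\<lambda>M. M $$ (i, j)"] that A' by auto
  have A'0: "A' $$ (i, 0) = (if i = 0 then e else 0)" if "i < Suc m" for i
  proof -
    have "A' = transpose_mat W * (A * W)"
      unfolding A'_def using Wc A by (simp add: assoc_mult_mat[of _ "Suc m" "Suc m"])
    then have "A' $$ (i, 0) = col W i \<bullet> (A *\<^sub>v col W 0)"
      using that Wc A by (simp del: col_mult2 add: col_mult2[symmetric])
    also have "\<dots> = e * (col W i \<bullet> col W 0)"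
      using W0 ev that Wc by (metis col_carrier_vec scalar_prod_smult_distrib zero_less_Suc)
    finally show ?thesis using orthonormal_mat_col_scalar_prod[OF W that] by simp
  qed
  have A'0': "A' $$ (0, j) = (if j = 0 then e else 0)" if "j < Suc m" for j
    using A'0[OF that] A'sym[OF _ that] by simp
  define A3 where "A3 = mat m m (\<lambda>(i, j). A' $$ (Suc i, Suc j))"
  have "transpose_mat A3 = A3" unfolding A3_def by (rule eq_matI) (auto simp: A'sym)
  moreover have "A' = four_block_mat (mat 1 1 (\<lambda>_. e)) (0\<^sub>m 1 m) (0\<^sub>m m 1) A3"
    by (rule eq_matI) (use A' in \<open>auto simp: A3_def A'0 A'0'\<close>)
  moreover have "A3 \<in> carrier_mat m m" unfolding A3_def by simp
  ultimately show thesis using that unfolding A'_def by blast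
qed

lemma transpose_four_block_one:
  fixes U :: "'a :: semiring_1 mat"
  assumes "U \<in> carrier_mat m m"
  shows "transpose_mat (four_block_mat (1\<^sub>m 1) (0\<^sub>m 1 m) (0\<^sub>m m 1) U)
    = four_block_mat (1\<^sub>m 1) (0\<^sub>m 1 m) (0\<^sub>m m 1) (transpose_mat U)"
  using assms by (subst transpose_four_block_mat) auto

lemma orthonormal_mat_four_block_one:
  assumes U: "orthonormal_mat m U"
  shows "orthonormal_mat (Suc m) (four_block_mat (1\<^sub>m 1) (0\<^sub>m 1 m) (0\<^sub>m m 1) U)"
proof -
  have Uc: "U \<in> carrier_mat m m" and Ut: "transpose_mat U \<in> carrier_mat m m"
    using U by (simp_all add: orthonormal_mat_def)
  show ?thesis
    unfolding orthonormal_mat_def transpose_four_block_one[OF Uc]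
    using U Uc
    by (subst mult_four_block_mat[OF one_carrier_mat zero_carrier_mat zero_carrier_mat Ut
          one_carrier_mat zero_carrier_mat zero_carrier_mat Uc])
      (auto simp: orthonormal_mat_def)
qed

lemma four_block_one_congruence:
  fixes U E A :: "'a :: comm_ring_1 mat"
  assumes U: "U \<in> carrier_mat m m" and E: "E \<in> carrier_mat 1 1" and A: "A \<in> carrier_mat m m"
  defines "B \<equiv> four_block_mat (1\<^sub>m 1) (0\<^sub>m 1 m) (0\<^sub>m m 1) U"
  shows "transpose_mat B * four_block_mat E (0\<^sub>m 1 m) (0\<^sub>m m 1) A * B
    = four_block_mat E (0\<^sub>m 1 m) (0\<^sub>m m 1) (transpose_mat U * A * U)"
proof -
  have Ut: "transpose_mat U \<in> carrier_mat m m" using U by simp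
  have "transpose_mat B * four_block_mat E (0\<^sub>m 1 m) (0\<^sub>m m 1) A
      = four_block_mat E (0\<^sub>m 1 m) (0\<^sub>m m 1) (transpose_mat U * A)"
    unfolding B_def transpose_four_block_one[OF U] using E A Ut
    by (subst mult_four_block_mat[OF one_carrier_mat zero_carrier_mat zero_carrier_mat Ut
          E zero_carrier_mat zero_carrier_mat A]) (use E in \<open>simp add: left_mult_one_mat\<close>)
  also have "\<dots> * B = four_block_mat E (0\<^sub>m 1 m) (0\<^sub>m m 1) (transpose_mat U * A * U)"
    unfolding B_def using U E A Ut
    by (subst mult_four_block_mat[OF E zero_carrier_mat zero_carrier_mat mult_carrier_mat[OF Ut A]
          one_carrier_mat zero_carrier_mat zero_carrier_mat U]) auto
  finally show ?thesis .
qed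

theorem symmetric_mat_orthonormal_diagonalization:
  fixes A :: "real mat"
  assumes "A \<in> carrier_mat n n" "transpose_mat A = A"
  shows "\<exists>U ds. orthonormal_mat n U \<and> length ds = n \<and>
    transpose_mat U * A * U = mat_diag n (\<lambda>i. ds ! i)"
  using assms
proof (induction n arbitrary: A)
  case 0
  show ?case
    by (intro exI[of _ "1\<^sub>m 0"] exI[of _ "[]"]) (auto simp: orthonormal_mat_def mat_diag_def)
next
  case (Suc m)
  obtain e v where v: "v \<in> carrier_vec (Suc m)" "v \<bullet> v = 1" "A *\<^sub>v v = e \<cdot>\<^sub>v v"
    using symmetric_mat_unit_eigenvector[OF Suc.prems] by blast
  obtain W where W: "orthonormal_mat (Suc m) W" "col W 0 = v"
    using orthonormal_mat_with_first_col[OF v(1,2)] by blast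
  obtain A3 where A3: "A3 \<in> carrier_mat m m" "transpose_mat A3 = A3"
    and WAW: "transpose_mat W * A * W = four_block_mat (mat 1 1 (\<lambda>_. e)) (0\<^sub>m 1 m) (0\<^sub>m m 1) A3"
    using orthonormal_congruence_eigenvector_block[OF Suc.prems W v(3)] by blast
  obtain U3 ds3 where U3: "orthonormal_mat m U3" "length ds3 = m"
    "transpose_mat U3 * A3 * U3 = mat_diag m (\<lambda>i. ds3 ! i)"
    using Suc.IH[OF A3] by blast
  define B where "B = four_block_mat (1\<^sub>m 1) (0\<^sub>m 1 m) (0\<^sub>m m 1) U3"
  have B: "orthonormal_mat (Suc m) B"
    unfolding B_def using orthonormal_mat_four_block_one[OF U3(1)] .
  have "transpose_mat (W * B) * A * (W * B) = transpose_mat B * (transpose_mat W * A * W) * B"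
    using transpose_mult_congruence Suc.prems(1) W(1) B orthonormal_mat_carrier by blast
  also have "\<dots> = four_block_mat (mat 1 1 (\<lambda>_. e)) (0\<^sub>m 1 m) (0\<^sub>m m 1) (mat_diag m (\<lambda>i. ds3 ! i))"
    unfolding WAW B_def U3(3)[symmetric]
    by (rule four_block_one_congruence[OF orthonormal_mat_carrier[OF U3(1)] _ A3(1)]) simp
  also have "\<dots> = mat_diag (Suc m) (\<lambda>i. (e # ds3) ! i)"
    by (rule eq_matI) (auto simp: mat_diag_def)
  finally show ?case
    using orthonormal_mat_mult[OF W(1) B] U3(2) by (intro exI[of _ "W * B"] exI[of _ "e # ds3"]) auto
qed

section \<open>The second eigenvalue bounds the Rayleigh quotient\<close>

lemma proots_prod_linear_factors: "proots (\<Prod>a\<leftarrow>ds. [:- a, 1:]) = mset (ds :: real list)"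
proof (induction ds)
  case (Cons e ds)
  have "(\<Prod>a\<leftarrow>ds. [:- a, 1:]) \<noteq> 0" by (auto simp: prod_list_zero_iff)
  then have "proots ([:- e, 1:] * (\<Prod>a\<leftarrow>ds. [:- a, 1:]))
      = proots [:- e, 1:] + proots (\<Prod>a\<leftarrow>ds. [:- a, 1:])"
    by (intro proots_mult) auto
  then show ?case using Cons by (simp del: mult_pCons_left)
qed simp

lemma orthonormal_congruence_inverse:
  assumes U: "orthonormal_mat n U" and A: "A \<in> carrier_mat n n"
  shows "A = U * (transpose_mat U * A * U) * transpose_mat U"
proof -
  have Uc: "U \<in> carrier_mat n n" using U by (rule orthonormal_mat_carrier)
  have "U * (transpose_mat U * A * U) * transpose_mat U
      = (U * transpose_mat U) * A * (U * transpose_mat U)"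
    using A Uc by (simp add: assoc_mult_mat[of _ n n _ n _ n])
  then show ?thesis using A orthonormal_mat_right_inverse[OF U] by simp
qed

lemma char_poly_orthonormal_diagonalization:
  fixes A :: "real mat"
  assumes A: "A \<in> carrier_mat n n" and U: "orthonormal_mat n U" and ds: "length ds = n"
    and diag: "transpose_mat U * A * U = mat_diag n (\<lambda>i. ds ! i)"
  shows "char_poly A = (\<Prod>a\<leftarrow>ds. [:- a, 1:])"
proof -
  have Uc: "U \<in> carrier_mat n n" using U by (rule orthonormal_mat_carrier)
  have UUt: "U * transpose_mat U = 1\<^sub>m n" using U by (rule orthonormal_mat_right_inverse)
  have "similar_mat_wit A (mat_diag n (\<lambda>i. ds ! i)) U (transpose_mat U)"
    unfolding similar_mat_wit_def diag[symmetric] Let_def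
    using A Uc U UUt orthonormal_congruence_inverse[OF U A] by (auto simp: orthonormal_mat_def)
  then have "similar_mat A (mat_diag n (\<lambda>i. ds ! i))"
    unfolding similar_mat_def by blast
  then have "char_poly A = char_poly (mat_diag n (\<lambda>i. ds ! i))" by (rule char_poly_similar)
  also have "\<dots> = (\<Prod>a\<leftarrow>diag_mat (mat_diag n (\<lambda>i. ds ! i)). [:- a, 1:])"
    by (rule char_poly_upper_triangular[OF mat_diag_dim]) (auto simp: mat_diag_def upper_triangular_def)
  also have "diag_mat (mat_diag n (\<lambda>i. ds ! i)) = ds"
    using ds by (intro nth_equalityI) (auto simp: diag_mat_def mat_diag_def)
  finally show ?thesis .
qed

lemma nth_le_second_largest:
  fixes ds :: "real list"
  assumes i: "i < length ds" and k: "k < length ds" and ik: "i \<noteq> k" and le: "ds ! i \<le> ds ! k"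
  shows "ds ! i \<le> rev (sort ds) ! 1"
proof (rule ccontr)
  assume "\<not> ?thesis"
  then have lt: "rev (sort ds) ! 1 < ds ! i" by simp
  define s where "s = rev (sort ds)"
  let ?P = "\<lambda>x. ds ! i \<le> x"
  have "card {i, k} \<le> card {j. j < length ds \<and> ?P (ds ! j)}"
    using i k le by (intro card_mono) auto
  then have "2 \<le> length (filter ?P ds)" using ik by (simp add: length_filter_conv_card)
  also have "length (filter ?P ds) = length (filter ?P s)"
    unfolding s_def by (metis mset_filter mset_rev mset_sort size_mset)
  also have "\<dots> \<le> card {0::nat}"
    unfolding length_filter_conv_card
  proof (intro card_mono subsetI)
    fix j assume j: "j \<in> {j. j < length s \<and> ?P (s ! j)}"
    have "s ! j \<le> s ! 1" if "1 \<le> j"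
      using j that unfolding s_def by (auto simp: rev_nth intro!: sorted_nth_mono)
    then show "j \<in> {0}" using j lt unfolding s_def by (cases j) auto
  qed simp
  finally show False by simp
qed

lemma scalar_prod_orthonormal_coords:
  assumes U: "orthonormal_mat n U" and z: "z \<in> carrier_vec n"
  shows "z \<bullet> z = (\<Sum>i<n. ((transpose_mat U *\<^sub>v z) $ i)\<^sup>2)"
proof -
  have Uc: "U \<in> carrier_mat n n" using U by (rule orthonormal_mat_carrier)
  define y where "y = transpose_mat U *\<^sub>v z"
  have y: "y \<in> carrier_vec n" unfolding y_def using Uc z by simp
  have "U *\<^sub>v y = z" unfolding y_def using Uc z orthonormal_mat_right_inverse[OF U]
    by (simp add: assoc_mult_mat_vec[of _ n n _ n z, symmetric])
  then have "z \<bullet> z = y \<bullet> y"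
    using transpose_vec_mult_scalar[OF Uc y z] unfolding y_def by simp
  also have "\<dots> = (\<Sum>i<n. (y $ i)\<^sup>2)"
    using y by (simp add: scalar_prod_def power2_eq_square lessThan_atLeast0)
  finally show ?thesis unfolding y_def .
qed

lemma quadratic_form_orthonormal_coords:
  fixes A :: "real mat"
  assumes A: "A \<in> carrier_mat n n" and U: "orthonormal_mat n U"
    and diag: "transpose_mat U * A * U = mat_diag n (\<lambda>i. ds ! i)" and z: "z \<in> carrier_vec n"
  shows "z \<bullet> (A *\<^sub>v z) = (\<Sum>i<n. ds ! i * ((transpose_mat U *\<^sub>v z) $ i)\<^sup>2)"
proof -
  have Uc: "U \<in> carrier_mat n n" using U by (rule orthonormal_mat_carrier)
  define D where "D = mat_diag n (\<lambda>i. ds ! i)"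
  define y where "y = transpose_mat U *\<^sub>v z"
  have y: "y \<in> carrier_vec n" unfolding y_def using Uc z by simp
  have D: "D \<in> carrier_mat n n" unfolding D_def by simp
  have "A = U * D * transpose_mat U"
    using orthonormal_congruence_inverse[OF U A] unfolding diag D_def .
  then have "A *\<^sub>v z = U *\<^sub>v (D *\<^sub>v y)"
    unfolding y_def using Uc D z by (simp add: assoc_mult_mat_vec[of _ n n _ n z])
  then have "z \<bullet> (A *\<^sub>v z) = y \<bullet> (D *\<^sub>v y)"
    using transpose_vec_mult_scalar[OF Uc, of "D *\<^sub>v y" z] D y z unfolding y_def by simp
  also have "\<dots> = (\<Sum>i<n. ds ! i * (y $ i)\<^sup>2)"
  proof -
    have "(D *\<^sub>v y) $ i = ds ! i * y $ i" if "i < n" for i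
      using that y unfolding D_def
      by (auto simp: scalar_prod_def mat_diag_def, subst sum.remove[of _ i], auto)
    then show ?thesis using y D
      by (simp add: scalar_prod_def power2_eq_square lessThan_atLeast0 mult_ac)
  qed
  finally show ?thesis unfolding y_def .
qed

lemma symmetric_mat_scalar_prod:
  fixes A :: "real mat"
  assumes "A \<in> carrier_mat n n" "transpose_mat A = A" "x \<in> carrier_vec n" "y \<in> carrier_vec n"
  shows "x \<bullet> (A *\<^sub>v y) = (A *\<^sub>v x) \<bullet> y"
  using transpose_vec_mult_scalar[OF assms(1,4,3)] assms by (metis comm_scalar_prod mult_mat_vec_carrier)

lemma quadratic_form_add_orthogonal_eigenvector:
  fixes A :: "real mat"
  assumes A: "A \<in> carrier_mat n n" and sym: "transpose_mat A = A"
    and u: "u \<in> carrier_vec n" and ev: "A *\<^sub>v u = d \<cdot>\<^sub>v u"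
    and x: "x \<in> carrier_vec n" and xu: "x \<bullet> u = 0"
  shows "(a \<cdot>\<^sub>v x + b \<cdot>\<^sub>v u) \<bullet> (A *\<^sub>v (a \<cdot>\<^sub>v x + b \<cdot>\<^sub>v u))
      = a\<^sup>2 * (x \<bullet> (A *\<^sub>v x)) + b\<^sup>2 * d * (u \<bullet> u)"
    and "(a \<cdot>\<^sub>v x + b \<cdot>\<^sub>v u) \<bullet> (a \<cdot>\<^sub>v x + b \<cdot>\<^sub>v u) = a\<^sup>2 * (x \<bullet> x) + b\<^sup>2 * (u \<bullet> u)"
proof -
  have ux: "u \<bullet> x = 0" using xu comm_scalar_prod[OF x u] by simp
  have uAx: "u \<bullet> (A *\<^sub>v x) = 0"
    using symmetric_mat_scalar_prod[OF A sym u x] ev u x ux by simp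
  have Ax: "A *\<^sub>v x \<in> carrier_vec n" using A x by simp
  have "A *\<^sub>v (a \<cdot>\<^sub>v x + b \<cdot>\<^sub>v u) = a \<cdot>\<^sub>v (A *\<^sub>v x) + (b * d) \<cdot>\<^sub>v u"
    using A x u ev by (simp add: mult_add_distrib_mat_vec[of _ n n] mult_mat_vec[of _ n n] smult_smult_assoc)
  then show "(a \<cdot>\<^sub>v x + b \<cdot>\<^sub>v u) \<bullet> (A *\<^sub>v (a \<cdot>\<^sub>v x + b \<cdot>\<^sub>v u))
      = a\<^sup>2 * (x \<bullet> (A *\<^sub>v x)) + b\<^sup>2 * d * (u \<bullet> u)"
    using x u Ax xu ux uAx
    by (simp add: add_scalar_prod_distrib[of _ n] scalar_prod_add_distrib[of _ n]
        power2_eq_square algebra_simps)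
  show "(a \<cdot>\<^sub>v x + b \<cdot>\<^sub>v u) \<bullet> (a \<cdot>\<^sub>v x + b \<cdot>\<^sub>v u) = a\<^sup>2 * (x \<bullet> x) + b\<^sup>2 * (u \<bullet> u)"
    using x u xu ux
    by (simp add: add_scalar_prod_distrib[of _ n] scalar_prod_add_distrib[of _ n]
        power2_eq_square algebra_simps)
qed

theorem quadratic_form_le_second_eigenvalue:
  fixes A :: "real mat"
  assumes A: "A \<in> carrier_mat n n" and sym: "transpose_mat A = A"
    and u: "u \<in> carrier_vec n" "u \<noteq> 0\<^sub>v n" and ev: "A *\<^sub>v u = d \<cdot>\<^sub>v u"
    and gap: "rev (sorted_list_of_multiset (proots (char_poly A))) ! 1 < d"
    and x: "x \<in> carrier_vec n" and xu: "x \<bullet> u = 0"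
  shows "x \<bullet> (A *\<^sub>v x) \<le> rev (sorted_list_of_multiset (proots (char_poly A))) ! 1 * (x \<bullet> x)"
proof -
  obtain U ds where U: "orthonormal_mat n U" and ds: "length ds = n"
    and diag: "transpose_mat U * A * U = mat_diag n (\<lambda>i. ds ! i)"
    using symmetric_mat_orthonormal_diagonalization[OF A sym] by blast
  define lambda2 where "lambda2 = rev (sort ds) ! 1"
  have lambda2: "rev (sorted_list_of_multiset (proots (char_poly A))) ! 1 = lambda2"
    unfolding char_poly_orthonormal_diagonalization[OF A U ds diag] proots_prod_linear_factors
      lambda2_def by simp
  have Ut: "transpose_mat U \<in> carrier_mat n n" using orthonormal_mat_carrier[OF U] by simp
  have uu: "0 < u \<bullet> u" using u scalar_prod_self_pos_iff by blast
  have "n \<noteq> 0" using u by auto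
  then obtain k where k: "k < n" "\<forall>i<n. ds ! i \<le> ds ! k"
    using ds by (metis Max_ge List.finite_set in_set_conv_nth length_greater_0_conv Max_in
        nth_mem set_empty2 neq0_conv)
  \<comment> \<open>Killing the coordinate of the top eigenvalue leaves only eigenvalues below lambda2.\<close>
  have bound: "z \<bullet> (A *\<^sub>v z) \<le> lambda2 * (z \<bullet> z)"
    if z: "z \<in> carrier_vec n" and zk: "(transpose_mat U *\<^sub>v z) $ k = 0" for z
  proof -
    have "ds ! i * ((transpose_mat U *\<^sub>v z) $ i)\<^sup>2 \<le> lambda2 * ((transpose_mat U *\<^sub>v z) $ i)\<^sup>2"
      if "i < n" for i
      using zk k nth_le_second_largest[of i ds k] that ds
      by (cases "i = k") (auto simp: lambda2_def intro: mult_right_mono)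
    then show ?thesis
      unfolding quadratic_form_orthonormal_coords[OF A U diag z] scalar_prod_orthonormal_coords[OF U z]
      by (simp add: sum_distrib_left) (rule sum_mono, simp)
  qed
  \<comment> \<open>Adding a multiple of u kills coordinate k; as x \<bottom> u, the u-part then separates, and
    it is dominated because lambda2 < d. The coefficient of x cannot vanish, for u itself
    would then satisfy the bound.\<close>
  define a where "a = (transpose_mat U *\<^sub>v u) $ k"
  define b where "b = - (transpose_mat U *\<^sub>v x) $ k"
  have "a \<noteq> 0"
  proof
    assume "a = 0"
    then have "d * (u \<bullet> u) \<le> lambda2 * (u \<bullet> u)" using bound[OF u(1)] ev u(1) unfolding a_def by simp
    then show False using gap lambda2 uu by simp
  qed
  define z where "z = a \<cdot>\<^sub>v x + b \<cdot>\<^sub>v u"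
  have "(transpose_mat U *\<^sub>v z) $ k = 0"
    unfolding z_def a_def b_def using Ut x u k(1)
    by (simp add: mult_add_distrib_mat_vec[of _ n n] mult_mat_vec[of _ n n])
  then have "a\<^sup>2 * (x \<bullet> (A *\<^sub>v x)) + b\<^sup>2 * d * (u \<bullet> u) \<le> lambda2 * (a\<^sup>2 * (x \<bullet> x) + b\<^sup>2 * (u \<bullet> u))"
    using bound[of z] quadratic_form_add_orthogonal_eigenvector[OF A sym u(1) ev x xu, of a b]
    unfolding z_def using x u by simp
  moreover have "b\<^sup>2 * lambda2 * (u \<bullet> u) \<le> b\<^sup>2 * d * (u \<bullet> u)"
    using gap lambda2 uu by (intro mult_right_mono mult_left_mono) auto
  ultimately have "a\<^sup>2 * (x \<bullet> (A *\<^sub>v x)) \<le> a\<^sup>2 * (lambda2 * (x \<bullet> x))"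
    by (simp add: algebra_simps)
  then show ?thesis using \<open>a \<noteq> 0\<close> lambda2 by simp
qed

section \<open>Bootstrap percolation on spectral expanders\<close>

lemma bp_step_increasing: "A \<subseteq> bp_step n E r A"
  unfolding bp_step_def by auto

lemma bp_iterates_mono: "i \<le> j \<Longrightarrow> (bp_step n E r ^^ i) A0 \<subseteq> (bp_step n E r ^^ j) A0"
  by (rule lift_Suc_mono_le[where f = "\<lambda>i. (bp_step n E r ^^ i) A0"]) (simp_all add: bp_step_increasing)

lemma bp_closure_superset: "A0 \<subseteq> bp_closure n E r A0"
  unfolding bp_closure_def by (metis UNIV_I UN_upper funpow_0)

lemma bp_closure_subset: "A0 \<subseteq> {0..<n} \<Longrightarrow> bp_closure n E r A0 \<subseteq> {0..<n}"
proof -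
  assume A0: "A0 \<subseteq> {0..<n}"
  have "(bp_step n E r ^^ i) A0 \<subseteq> {0..<n}" for i
    by (induction i) (use A0 in \<open>auto simp: bp_step_def\<close>)
  then show ?thesis unfolding bp_closure_def by auto
qed

lemma finite_subset_bp_iterate:
  assumes "finite F" "F \<subseteq> bp_closure n E r A0"
  obtains i where "F \<subseteq> (bp_step n E r ^^ i) A0"
  using assms
proof (induction F arbitrary: thesis rule: finite_induct)
  case empty
  then show ?case by blast
next
  case (insert x F)
  obtain i where i: "F \<subseteq> (bp_step n E r ^^ i) A0" using insert by blast
  obtain j where j: "x \<in> (bp_step n E r ^^ j) A0"
    using insert.prems(2) unfolding bp_closure_def by blast
  have "F \<subseteq> (bp_step n E r ^^ max i j) A0" "x \<in> (bp_step n E r ^^ max i j) A0"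
    using i j bp_iterates_mono[of i "max i j" n E r A0] bp_iterates_mono[of j "max i j" n E r A0]
    by auto
  then show ?case using insert.prems(1) by blast
qed

lemma card_nbrs_inter_bp_closure_less:
  assumes "v < n" "v \<notin> bp_closure n E r A0"
  shows "card (nbrs n E v \<inter> bp_closure n E r A0) < r"
proof (rule ccontr)
  assume "\<not> ?thesis"
  moreover have "finite (nbrs n E v \<inter> bp_closure n E r A0)" unfolding nbrs_def by auto
  then obtain i where i: "nbrs n E v \<inter> bp_closure n E r A0 \<subseteq> (bp_step n E r ^^ i) A0"
    by (rule finite_subset_bp_iterate) blast
  have "finite (nbrs n E v)" unfolding nbrs_def by auto
  then have "card (nbrs n E v \<inter> bp_closure n E r A0) \<le> card (nbrs n E v \<inter> (bp_step n E r ^^ i) A0)"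
    using i by (intro card_mono) auto
  ultimately have "v \<in> (bp_step n E r ^^ Suc i) A0" using assms(1) unfolding bp_step_def by simp
  then show False using assms(2) unfolding bp_closure_def by blast
qed

definition cut_edges :: "nat \<Rightarrow> (nat \<Rightarrow> nat \<Rightarrow> bool) \<Rightarrow> nat set \<Rightarrow> nat" where
  "cut_edges n E B = (\<Sum>v\<in>{0..<n} - B. card (nbrs n E v \<inter> B))"

lemma sum_adjacent_indicator:
  "(\<Sum>j\<in>{0..<n}. of_bool (E i j) * of_bool (j \<in> B)) = real (card (nbrs n E i \<inter> B))"
proof -
  have "{0..<n} \<inter> {j. E i j \<and> j \<in> B} = nbrs n E i \<inter> B" unfolding nbrs_def by auto
  then show ?thesis by (simp flip: of_bool_conj)
qed

lemma regular_degree_sum: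
  assumes "regular n E d" "i < n"
  shows "(\<Sum>j\<in>{0..<n}. of_bool (E i j)) = real d"
  using sum_adjacent_indicator[where B = UNIV] assms unfolding regular_def by simp

lemma laplacian_quadratic_form:
  fixes a :: "nat \<Rightarrow> nat \<Rightarrow> real"
  assumes sym: "\<And>i j. a i j = a j i" and deg: "\<And>i. i < n \<Longrightarrow> (\<Sum>j\<in>{0..<n}. a i j) = d"
  shows "(\<Sum>i\<in>{0..<n}. \<Sum>j\<in>{0..<n}. a i j * (x i - x j)\<^sup>2)
    = 2 * d * (\<Sum>i\<in>{0..<n}. (x i)\<^sup>2) - 2 * (\<Sum>i\<in>{0..<n}. x i * (\<Sum>j\<in>{0..<n}. a i j * x j))"
proof -
  have row: "(\<Sum>i\<in>{0..<n}. \<Sum>j\<in>{0..<n}. a i j * (x i)\<^sup>2) = d * (\<Sum>i\<in>{0..<n}. (x i)\<^sup>2)"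
    by (simp add: sum_distrib_left sum_distrib_right[symmetric] deg mult.commute)
  have "(\<Sum>i\<in>{0..<n}. \<Sum>j\<in>{0..<n}. a i j * (x j)\<^sup>2)
      = (\<Sum>j\<in>{0..<n}. \<Sum>i\<in>{0..<n}. a j i * (x j)\<^sup>2)"
    by (subst sum.swap) (simp add: sym)
  then have col: "(\<Sum>i\<in>{0..<n}. \<Sum>j\<in>{0..<n}. a i j * (x j)\<^sup>2) = d * (\<Sum>i\<in>{0..<n}. (x i)\<^sup>2)"
    using row by simp
  have "(\<Sum>i\<in>{0..<n}. \<Sum>j\<in>{0..<n}. a i j * (x i - x j)\<^sup>2)
      = (\<Sum>i\<in>{0..<n}. \<Sum>j\<in>{0..<n}. a i j * (x i)\<^sup>2)
        + (\<Sum>i\<in>{0..<n}. \<Sum>j\<in>{0..<n}. a i j * (x j)\<^sup>2)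
        - 2 * (\<Sum>i\<in>{0..<n}. x i * (\<Sum>j\<in>{0..<n}. a i j * x j))"
    by (simp add: power2_diff algebra_simps sum.distrib sum_subtractf sum_distrib_left)
  then show ?thesis unfolding row col by simp
qed

lemma dirichlet_form_indicator:
  assumes G: "simple_graph n E" and B: "B \<subseteq> {0..<n}"
  shows "(\<Sum>i\<in>{0..<n}. \<Sum>j\<in>{0..<n}. of_bool (E i j) * (of_bool (i \<in> B) - of_bool (j \<in> B))\<^sup>2)
    = 2 * real (cut_edges n E B)"
proof -
  let ?f = "\<lambda>i. of_bool (i \<in> B) :: real"
  have Esym: "E i j = E j i" for i j using G unfolding simple_graph_def by blast
  have idem: "?f i * ?f i = ?f i" for i by simp
  have nbrs: "{0..<n} \<inter> Collect (E i) \<inter> B = nbrs n E i \<inter> B" for i by (auto simp: nbrs_def)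
  have "(\<Sum>i\<in>{0..<n}. \<Sum>j\<in>{0..<n}. of_bool (E i j) * (?f i - ?f j)\<^sup>2)
      = (\<Sum>i\<in>{0..<n}. \<Sum>j\<in>{0..<n}. of_bool (E i j) * (?f i * (1 - ?f j)))
        + (\<Sum>i\<in>{0..<n}. \<Sum>j\<in>{0..<n}. of_bool (E i j) * (?f j * (1 - ?f i)))"
    by (simp add: sum.distrib[symmetric] power2_eq_square algebra_simps idem)
  also have "(\<Sum>i\<in>{0..<n}. \<Sum>j\<in>{0..<n}. of_bool (E i j) * (?f i * (1 - ?f j)))
      = (\<Sum>i\<in>{0..<n}. \<Sum>j\<in>{0..<n}. of_bool (E i j) * (?f j * (1 - ?f i)))"
    by (subst sum.swap) (simp add: Esym)
  also have "(\<Sum>i\<in>{0..<n}. \<Sum>j\<in>{0..<n}. of_bool (E i j) * (?f j * (1 - ?f i)))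
      = (\<Sum>i\<in>{0..<n} - B. real (card (nbrs n E i \<inter> B)))"
    by (simp add: sum_distrib_left[symmetric] mult_ac nbrs
        sum.mono_neutral_cong_right[of "{0..<n}" "{0..<n} - B"])
  finally show ?thesis unfolding cut_edges_def by simp
qed

lemma adj_mat_carrier: "adj_mat n E \<in> carrier_mat n n"
  unfolding adj_mat_def by simp

lemma adj_mat_symmetric: "simple_graph n E \<Longrightarrow> transpose_mat (adj_mat n E) = adj_mat n E"
  unfolding adj_mat_def simple_graph_def by (rule eq_matI) auto

lemma adj_mat_mult_vec:
  "i < n \<Longrightarrow> (adj_mat n E *\<^sub>v vec n x) $ i = (\<Sum>j\<in>{0..<n}. of_bool (E i j) * x j)"
  unfolding adj_mat_def by (simp add: scalar_prod_def of_bool_def)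

lemma adj_mat_quadratic_form:
  "vec n x \<bullet> (adj_mat n E *\<^sub>v vec n x) = (\<Sum>i\<in>{0..<n}. x i * (\<Sum>j\<in>{0..<n}. of_bool (E i j) * x j))"
  unfolding scalar_prod_def using adj_mat_carrier[of n E]
  by (intro sum.cong) (simp_all del: index_mult_mat_vec add: adj_mat_mult_vec)

lemma regular_adj_mat_ones:
  "regular n E d \<Longrightarrow> adj_mat n E *\<^sub>v vec n (\<lambda>_. 1) = real d \<cdot>\<^sub>v vec n (\<lambda>_. 1)"
  using adj_mat_carrier[of n E]
  by (intro eq_vecI) (auto simp del: index_mult_mat_vec sum_of_bool_eq simp: adj_mat_mult_vec regular_degree_sum)

lemma sum_square_centered_indicator:
  assumes B: "B \<subseteq> {0..<n}" and n: "n > 0"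
  shows "(\<Sum>i\<in>{0..<n}. (of_bool (i \<in> B) - real (card B) / real n)\<^sup>2)
    = real (card B) * real (card ({0..<n} - B)) / real n"
proof -
  have "card B \<le> n" using B by (metis card_atLeastLessThan card_mono finite_atLeastLessThan diff_zero)
  then have cards: "real (card ({0..<n} - B)) = real n - real (card B)"
    using B by (simp add: card_Diff_subset finite_subset of_nat_diff)
  let ?c = "real (card B) / real n"
  have sum_ind: "(\<Sum>i\<in>{0..<n}. of_bool (i \<in> B) :: real) = real (card B)"
    using B by (simp add: Int_absorb1)
  have "(\<Sum>i\<in>{0..<n}. (of_bool (i \<in> B) - ?c)\<^sup>2)
      = (\<Sum>i\<in>{0..<n}. of_bool (i \<in> B) - 2 * ?c * of_bool (i \<in> B) + ?c\<^sup>2)"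
    by (intro sum.cong) (simp_all add: power2_eq_square algebra_simps)
  also have "\<dots> = real (card B) - 2 * ?c * real (card B) + real n * ?c\<^sup>2"
    by (simp only: sum.distrib sum_subtractf sum_distrib_left[symmetric] sum_ind) simp
  also have "\<dots> = real (card B) * real (card ({0..<n} - B)) / real n"
    using n unfolding cards by (simp add: field_simps power2_eq_square)
  finally show ?thesis .
qed

theorem cut_edges_spectral_lower_bound:
  fixes \<delta> :: real
  assumes G: "simple_graph n E" and reg: "regular n E d" and d: "d > 0" and \<delta>: "\<delta> < 1"
    and spec: "adj_eigenvalues n E ! 1 \<le> \<delta> * real d"
    and B: "B \<subseteq> {0..<n}"
  shows "(1 - \<delta>) * real d * real (card B) * real (card ({0..<n} - B)) \<le> real n * real (cut_edges n E B)"
proof (cases "n = 0")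
  case True
  then show ?thesis using B by simp
next
  case False
  define x where "x i = of_bool (i \<in> B) - real (card B) / real n" for i
  define X where "X = (\<Sum>i\<in>{0..<n}. (x i)\<^sup>2)"
  define Q where "Q = (\<Sum>i\<in>{0..<n}. x i * (\<Sum>j\<in>{0..<n}. of_bool (E i j) * x j))"
  let ?one = "vec n (\<lambda>_. 1 :: real)"
  have X: "X = real (card B) * real (card ({0..<n} - B)) / real n"
    unfolding X_def x_def using sum_square_centered_indicator[OF B] False by simp
  have "vec n x \<bullet> ?one = (\<Sum>i\<in>{0..<n}. of_bool (i \<in> B)) - real (card B)"
    using False by (simp add: x_def scalar_prod_def sum_subtractf)
  then have x_one: "vec n x \<bullet> ?one = 0" using B by (simp add: Int_absorb1)
  have "?one \<noteq> 0\<^sub>v n" using False by (metis dim_vec index_vec index_zero_vec(1) neq0_conv zero_neq_one)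
  moreover have "adj_eigenvalues n E ! 1 < real d" using spec \<delta> d by (simp add: order_le_less_trans)
  ultimately have "vec n x \<bullet> (adj_mat n E *\<^sub>v vec n x) \<le> adj_eigenvalues n E ! 1 * (vec n x \<bullet> vec n x)"
    using quadratic_form_le_second_eigenvalue[OF adj_mat_carrier adj_mat_symmetric[OF G] _ _
        regular_adj_mat_ones[OF reg] _ _ x_one]
    unfolding adj_eigenvalues_def by simp
  then have "Q \<le> adj_eigenvalues n E ! 1 * X"
    unfolding Q_def X_def adj_mat_quadratic_form by (simp add: scalar_prod_def power2_eq_square)
  also have "\<dots> \<le> \<delta> * real d * X"
    using spec X by (intro mult_right_mono) auto
  finally have Q: "Q \<le> \<delta> * real d * X" .
  have Esym: "E i j = E j i" for i j using G unfolding simple_graph_def by blast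
  have "x i - x j = of_bool (i \<in> B) - of_bool (j \<in> B)" for i j by (simp add: x_def)
  then have "(\<Sum>i\<in>{0..<n}. \<Sum>j\<in>{0..<n}. of_bool (E i j) * (x i - x j)\<^sup>2) = 2 * real (cut_edges n E B)"
    using dirichlet_form_indicator[OF G B] by simp
  moreover have "(\<Sum>i\<in>{0..<n}. \<Sum>j\<in>{0..<n}. of_bool (E i j) * (x i - x j)\<^sup>2) = 2 * real d * X - 2 * Q"
    unfolding X_def Q_def
    by (rule laplacian_quadratic_form[OF _ regular_degree_sum[OF reg]]) (simp add: Esym)
  ultimately have "(1 - \<delta>) * real d * X \<le> real (cut_edges n E B)"
    using Q by (simp add: algebra_simps)
  then show ?thesis using False unfolding X by (simp add: field_simps)
qed

theorem lemma1:
  fixes n d :: nat and E :: "nat \<Rightarrow> nat \<Rightarrow> bool" and \<delta> :: real and A :: "nat set"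
  assumes "simple_graph n E" and "regular n E d" and "d > 0"
    and "0 < \<delta>" and "\<delta> < 1"
    and "adj_eigenvalues n E ! 1 \<le> \<delta> * real d"
    and "A \<subseteq> {0..<n}"
    and "real (card A) > real n / ((1 - \<delta>) * real d)"
  shows "contagious n E 2 A"
proof (rule ccontr)
  assume "\<not> contagious n E 2 A"
  define B where "B = bp_closure n E 2 A"
  define C where "C = {0..<n} - B"
  have B: "B \<subseteq> {0..<n}" unfolding B_def using bp_closure_subset[OF assms(7)] .
  then have "C \<noteq> {}"
    using \<open>\<not> contagious n E 2 A\<close> unfolding contagious_def B_def C_def by blast
  then have C: "card C > 0" unfolding C_def by (simp add: card_gt_0_iff)
  have "cut_edges n E B \<le> card C"
    unfolding cut_edges_def C_def[symmetric]
    using sum_mono[of C "\<lambda>v. card (nbrs n E v \<inter> B)" "\<lambda>_. 1"]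
      card_nbrs_inter_bp_closure_less[of _ n E 2 A]
    by (force simp: B_def C_def)
  then have "real n * real (cut_edges n E B) \<le> real n * real (card C)"
    by (simp add: mult_left_mono)
  then have "(1 - \<delta>) * real d * real (card B) * real (card C) \<le> real n * real (card C)"
    using cut_edges_spectral_lower_bound[OF assms(1-3,5,6) B] unfolding C_def by linarith
  then have "(1 - \<delta>) * real d * real (card B) \<le> real n"
    using C by (simp add: mult.commute)
  then have "real (card B) \<le> real n / ((1 - \<delta>) * real d)"
    using assms(3,5) by (simp add: field_simps)
  moreover have "card A \<le> card B"
    unfolding B_def using bp_closure_superset B by (metis B_def card_mono finite_atLeastLessThan finite_subset)
  ultimately show False using assms(8) by simp
qed

end
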